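(* Let $k\ge 3$ and let $\mathcal{H}$ be a $k$-uniform hypertree. Then every eigenvalue $\lambda$ of $\mathcal{H}$ satisfies $\lambda^k\in\mathbb{R}$ if and only if $\mathcal{H}$ is a power tree, i.e., $\mathcal{H}\cong T^k$ for some (ordinary, $2$-uniform) tree $T$.
   Context: The paper phrases the spectral condition as $\sigma(\mathcal{H})\subseteq\mathbb{R}[\zeta_k]$ ($\zeta_k$ a principal $k$-th root of unity), meaning that every eigenvalue is a $k$-th root of a real number. Eigenvalues: for a $k$-uniform hypergraph on $[n]$ with normalized adjacency tensor $a_{i_1\dots i_k}=\frac1{(k-1)!}$ if $\{i_1,\dots,i_k\}$ is an edge and $0$ otherwise, $\lambda\in\mathbb{C}$ is an eigenvalue if there is $\mathbf{x}\in\mathbb{C}^n\setminus\{0\}$ with $\sum_{i_2,\dots,i_k}a_{j i_2\dots i_k}x_{i_2}\cdots x_{i_k}=\lambda x_j^{k-1}$ for all $j$; $\sigma(\mathcal{H})$ is the set of eigenvalues. A $k$-uniform hypertree is a connected acyclic $k$-uniform hypergraph. For a graph $T$ and $k\ge 2$, the $k$-th power $T^k$ is the $k$-uniform hypergraph obtained by adding to each edge $e$ of $T$ exactly $k-2$ new vertices $v_{e,1},\dots,v_{e,k-2}$ (distinct for distinct edges, each of degree $1$): $V(T^k)=V(T)\cup\{v_{e,j}\}$, $E(T^k)=\{e\cup\{v_{e,1},\dots,v_{e,k-2}\}: e\in E(T)\}$. *)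

theory Defs
  imports Complex_Main
begin

definition uniform_hypergraph :: "nat \<Rightarrow> 'a set \<Rightarrow> 'a set set \<Rightarrow> bool" where
  "uniform_hypergraph k V E \<longleftrightarrow> finite V \<and> (\<forall>e\<in>E. e \<subseteq> V \<and> card e = k)"

definition hg_connected :: "'a set \<Rightarrow> 'a set set \<Rightarrow> bool" where
  "hg_connected V E \<longleftrightarrow> V \<noteq> {} \<and>
     (\<forall>u\<in>V. \<forall>v\<in>V. (u, v) \<in> {(a, b). \<exists>e\<in>E. a \<in> e \<and> b \<in> e}\<^sup>*)"

definition berge_cycle :: "'a set set \<Rightarrow> 'a list \<Rightarrow> 'a set list \<Rightarrow> bool" where
  "berge_cycle E vs es \<longleftrightarrow> length vs = length es \<and> length vs \<ge> 2 \<and>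
     distinct vs \<and> distinct es \<and> set es \<subseteq> E \<and>
     (\<forall>i < length vs. vs ! i \<in> es ! i \<and> vs ! ((i + 1) mod length vs) \<in> es ! i)"

definition hg_acyclic :: "'a set set \<Rightarrow> bool" where
  "hg_acyclic E \<longleftrightarrow> \<not> (\<exists>vs es. berge_cycle E vs es)"

definition hypertree :: "nat \<Rightarrow> 'a set \<Rightarrow> 'a set set \<Rightarrow> bool" where
  "hypertree k V E \<longleftrightarrow> uniform_hypergraph k V E \<and> hg_connected V E \<and> hg_acyclic E"

definition adj_tensor :: "nat \<Rightarrow> 'a set set \<Rightarrow> 'a list \<Rightarrow> complex" where
  "adj_tensor k E ids = (if set ids \<in> E then 1 / of_nat (fact (k - 1)) else 0)"

definition is_eigenvalue :: "nat \<Rightarrow> 'a set \<Rightarrow> 'a set set \<Rightarrow> complex \<Rightarrow> bool" where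
  "is_eigenvalue k V E lam \<longleftrightarrow> (\<exists>x :: 'a \<Rightarrow> complex. (\<exists>v\<in>V. x v \<noteq> 0) \<and>
     (\<forall>j\<in>V. (\<Sum>ids \<in> {ids. set ids \<subseteq> V \<and> length ids = k - 1}.
                 adj_tensor k E (j # ids) * (\<Prod>i\<leftarrow>ids. x i)) = lam * x j ^ (k - 1)))"

definition hg_spectrum :: "nat \<Rightarrow> 'a set \<Rightarrow> 'a set set \<Rightarrow> complex set" where
  "hg_spectrum k V E = {lam. is_eigenvalue k V E lam}"

definition hg_isomorphic :: "'a set \<Rightarrow> 'a set set \<Rightarrow> 'b set \<Rightarrow> 'b set set \<Rightarrow> bool" where
  "hg_isomorphic V E V' E' \<longleftrightarrow> (\<exists>f. bij_betw f V V' \<and> E' = (\<lambda>e. f ` e) ` E)"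

definition power_vertices :: "nat \<Rightarrow> 'a set \<Rightarrow> 'a set set \<Rightarrow> ('a + ('a set \<times> nat)) set" where
  "power_vertices k W F = Inl ` W \<union> {Inr (e, j) | e j. e \<in> F \<and> j < k - 2}"

definition power_edges :: "nat \<Rightarrow> 'a set set \<Rightarrow> ('a + ('a set \<times> nat)) set set" where
  "power_edges k F = (\<lambda>e. Inl ` e \<union> {Inr (e, j) | j. j < k - 2}) ` F"

definition power_tree :: "nat \<Rightarrow> 'a set \<Rightarrow> 'a set set \<Rightarrow> bool" where
  "power_tree k V E \<longleftrightarrow> (\<exists>(W :: 'a set) F. hypertree 2 W F \<and>
      hg_isomorphic V E (power_vertices k W F) (power_edges k F))"

end

theory Submission
  imports Defs "HOL-Combinatorics.Multiset_Permutations" "HOL-Analysis.Complex_Transcendental"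
begin

text \<open>
  Call a vertex shared if it lies in two edges. If every edge contains at most two shared
  vertices, contracting each edge to a two-element subset containing them gives a tree \<open>T\<close>
  with \<open>H \<cong> T\<^sup>k\<close>. Otherwise some edge \<open>e\<close> contains shared vertices \<open>v\<^sub>1, v\<^sub>2, v\<^sub>3\<close>
  lying in further edges \<open>f\<^sub>1, f\<^sub>2, f\<^sub>3\<close>. By acyclicity every other edge meets
  \<open>e \<union> f\<^sub>1 \<union> f\<^sub>2 \<union> f\<^sub>3\<close> in at most one vertex, so a vector supported there is an eigenvector
  for \<open>\<lambda> = s\<^sup>3\<close> as soon as \<open>z = s\<^sup>k\<close> satisfies \<open>z\<^sup>3 = z\<^sup>2 + 1\<close>; a non-real root of this
  cubic gives \<open>\<lambda>\<^sup>k = z\<^sup>3 \<notin> \<real>\<close>.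

  Conversely, let \<open>y\<close> be an eigenvector of \<open>T\<^sup>k\<close> for \<open>\<lambda> \<noteq> 0\<close>, and let \<open>P\<^sub>e\<close> be the product of
  \<open>y\<close> over the edge of \<open>T\<^sup>k\<close> grown from the edge \<open>e\<close> of \<open>T\<close>. The equations at the \<open>k - 2\<close>
  added vertices give \<open>\<lambda> y\<^sup>k = P\<^sub>e\<close> there, so the weights \<open>t\<^sub>e = P\<^sub>e / \<lambda>\<close> and
  \<open>w\<^sub>a = y\<^sub>a\<^sup>k\<close> satisfy \<open>\<Sum>\<^bsub>e \<ni> a\<^esub> t\<^sub>e = w\<^sub>a\<close> and \<open>\<lambda>\<^sup>k t\<^bsub>ab\<^esub>\<^sup>2 = w\<^sub>a w\<^sub>b\<close>. With
  \<open>\<rho>\<^sub>a = \<surd>w\<^sub>a\<close> and \<open>\<sigma> = \<surd>\<lambda>\<^sup>k\<close>, the number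
  \<open>\<sigma> \<Sum>\<^sub>a |\<rho>\<^sub>a|\<^sup>2 = \<Sum>\<^bsub>ab\<^esub> \<sigma> t\<^bsub>ab\<^esub> (cnj \<rho>\<^sub>a / \<rho>\<^sub>a + cnj \<rho>\<^sub>b / \<rho>\<^sub>b)\<close> is real because
  \<open>\<sigma> t\<^bsub>ab\<^esub> = \<plusminus>\<rho>\<^sub>a \<rho>\<^sub>b\<close>; hence \<open>\<sigma>\<close> is real and \<open>\<lambda>\<^sup>k = \<sigma>\<^sup>2 \<ge> 0\<close>.
\<close>

section \<open>Eigenvectors in edge form\<close>

definition edge_sum :: "'a set set \<Rightarrow> ('a \<Rightarrow> complex) \<Rightarrow> 'a \<Rightarrow> complex" where
  "edge_sum E x j = (\<Sum>e\<in>{e\<in>E. j \<in> e}. \<Prod>v\<in>e - {j}. x v)"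

definition is_eigenvector :: "nat \<Rightarrow> 'a set \<Rightarrow> 'a set set \<Rightarrow> complex \<Rightarrow> ('a \<Rightarrow> complex) \<Rightarrow> bool" where
  "is_eigenvector k V E lam x \<longleftrightarrow>
     (\<exists>v\<in>V. x v \<noteq> 0) \<and> (\<forall>j\<in>V. edge_sum E x j = lam * x j ^ (k - 1))"

lemma uniform_hypergraph_finite_edges:
  assumes "uniform_hypergraph k V E"
  shows "finite E" and "e \<in> E \<Longrightarrow> finite e"
proof -
  have "finite V" "E \<subseteq> Pow V" using assms by (auto simp: uniform_hypergraph_def)
  then show "finite E" and "e \<in> E \<Longrightarrow> finite e" by (auto intro: finite_subset)
qed

lemma lists_completing_edge:
  assumes "uniform_hypergraph k V E"
  shows "{ids. set ids \<subseteq> V \<and> length ids = k - 1 \<and> set (j # ids) \<in> E}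
           = (\<Union>e\<in>{e\<in>E. j \<in> e}. permutations_of_set (e - {j}))"
proof (intro set_eqI iffI)
  fix ids assume ids: "ids \<in> {ids. set ids \<subseteq> V \<and> length ids = k - 1 \<and> set (j # ids) \<in> E}"
  then have card: "card (set (j # ids)) = k"
    using assms by (auto simp: uniform_hypergraph_def)
  then have "k \<noteq> 0" by (metis card_0_eq finite_set list.set_intros(1) empty_iff)
  with card ids have "distinct (j # ids)" by (intro card_distinct) auto
  with ids show "ids \<in> (\<Union>e\<in>{e\<in>E. j \<in> e}. permutations_of_set (e - {j}))"
    by (auto simp: permutations_of_set_def intro!: bexI[of _ "set (j # ids)"])
next
  fix ids assume "ids \<in> (\<Union>e\<in>{e\<in>E. j \<in> e}. permutations_of_set (e - {j}))"
  then obtain e where e: "e \<in> E" "j \<in> e" "set ids = e - {j}" "distinct ids"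
    by (auto simp: permutations_of_set_def)
  then have "length ids = card e - 1"
    using uniform_hypergraph_finite_edges(2)[OF assms] by (simp add: distinct_card[symmetric])
  with e assms show "ids \<in> {ids. set ids \<subseteq> V \<and> length ids = k - 1 \<and> set (j # ids) \<in> E}"
    by (auto simp: uniform_hypergraph_def insert_absorb)
qed

lemma adj_tensor_sum_eq_edge_sum:
  assumes "uniform_hypergraph k V E"
  shows "(\<Sum>ids \<in> {ids. set ids \<subseteq> V \<and> length ids = k - 1}.
            adj_tensor k E (j # ids) * (\<Prod>i\<leftarrow>ids. x i)) = edge_sum E x j"
proof -
  have finE: "finite E" and fin: "\<And>e. e \<in> E \<Longrightarrow> finite e"
    using uniform_hypergraph_finite_edges[OF assms] by auto
  have card: "\<And>e. e \<in> E \<Longrightarrow> card e = k" using assms by (simp add: uniform_hypergraph_def)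
  have "finite V" using assms by (simp add: uniform_hypergraph_def)
  then have "(\<Sum>ids \<in> {ids. set ids \<subseteq> V \<and> length ids = k - 1}.
                 adj_tensor k E (j # ids) * (\<Prod>i\<leftarrow>ids. x i))
      = (\<Sum>ids \<in> {ids. set ids \<subseteq> V \<and> length ids = k - 1 \<and> set (j # ids) \<in> E}.
                 adj_tensor k E (j # ids) * (\<Prod>i\<leftarrow>ids. x i))"
    by (intro sum.mono_neutral_right) (auto simp: adj_tensor_def finite_lists_length_eq)
  also have "\<dots> = (\<Sum>e\<in>{e\<in>E. j \<in> e}. \<Sum>ids\<in>permutations_of_set (e - {j}).
                      adj_tensor k E (j # ids) * (\<Prod>i\<leftarrow>ids. x i))"
    unfolding lists_completing_edge[OF assms] using finE
    by (intro sum.UNION_disjoint) (auto, auto simp: permutations_of_set_def)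
  also have "\<dots> = (\<Sum>e\<in>{e\<in>E. j \<in> e}. \<Prod>v\<in>e - {j}. x v)"
  proof (rule sum.cong[OF refl])
    fix e assume e: "e \<in> {e\<in>E. j \<in> e}"
    have "adj_tensor k E (j # ids) * (\<Prod>i\<leftarrow>ids. x i) = (\<Prod>v\<in>e - {j}. x v) / fact (k - 1)"
      if "ids \<in> permutations_of_set (e - {j})" for ids
      using that e by (simp add: adj_tensor_def permutations_of_set_def insert_absorb
                          flip: prod.distinct_set_conv_list)
    moreover have "card (permutations_of_set (e - {j})) = fact (k - 1)"
      using e fin card by simp
    ultimately show "(\<Sum>ids\<in>permutations_of_set (e - {j}).
                        adj_tensor k E (j # ids) * (\<Prod>i\<leftarrow>ids. x i)) = (\<Prod>v\<in>e - {j}. x v)"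
      by simp
  qed
  finally show ?thesis by (simp add: edge_sum_def)
qed

lemma is_eigenvalue_iff_eigenvector:
  assumes "uniform_hypergraph k V E"
  shows "is_eigenvalue k V E lam \<longleftrightarrow> (\<exists>x. is_eigenvector k V E lam x)"
  unfolding is_eigenvalue_def is_eigenvector_def adj_tensor_sum_eq_edge_sum[OF assms] ..

lemma edge_sum_image:
  assumes f: "inj_on f V" and E: "\<forall>e\<in>E. e \<subseteq> V" and j: "j \<in> V"
  shows "edge_sum ((\<lambda>e. f ` e) ` E) (x \<circ> inv_into V f) (f j) = edge_sum E x j"
proof -
  have "f j \<in> f ` e \<longleftrightarrow> j \<in> e" if "e \<in> E" for e
    using f E j that by (meson inj_on_image_mem_iff)
  then have incident: "{e'\<in>(\<lambda>e. f ` e) ` E. f j \<in> e'} = (\<lambda>e. f ` e) ` {e\<in>E. j \<in> e}"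
    by auto
  have inj: "inj_on (\<lambda>e. f ` e) {e\<in>E. j \<in> e}"
    using f E by (auto simp: inj_on_def inj_on_image_eq_iff)
  have "(\<Prod>v\<in>f ` e - {f j}. (x \<circ> inv_into V f) v) = (\<Prod>v\<in>e - {j}. x v)"
    if "e \<in> E" for e
  proof -
    have "e \<subseteq> V" using that E by blast
    then have "f ` e - {f j} = f ` (e - {j})" and "inj_on f (e - {j})"
      using f j by (auto simp: inj_on_def)
    with \<open>e \<subseteq> V\<close> f show ?thesis by (simp add: prod.reindex subset_iff)
  qed
  then show ?thesis
    unfolding edge_sum_def incident by (simp add: sum.reindex[OF inj])
qed

lemma is_eigenvector_image:
  assumes f: "bij_betw f V V'" and E: "\<forall>e\<in>E. e \<subseteq> V" and x: "is_eigenvector k V E lam x"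
  shows "is_eigenvector k V' ((\<lambda>e. f ` e) ` E) lam (x \<circ> inv_into V f)"
proof -
  have inj: "inj_on f V" and V': "V' = f ` V" using f by (auto simp: bij_betw_def)
  obtain v where "v \<in> V" "x v \<noteq> 0" using x by (auto simp: is_eigenvector_def)
  with inj have "\<exists>v'\<in>V'. (x \<circ> inv_into V f) v' \<noteq> 0" by (auto simp: V')
  moreover have "edge_sum ((\<lambda>e. f ` e) ` E) (x \<circ> inv_into V f) (f j)
                   = lam * (x \<circ> inv_into V f) (f j) ^ (k - 1)" if "j \<in> V" for j
    using that x inj edge_sum_image[OF inj E that] by (simp add: is_eigenvector_def)
  ultimately show ?thesis by (auto simp: is_eigenvector_def V')
qed

lemma eigenvector_edge_products:
  assumes x: "is_eigenvector k V E lam x" and fin: "\<forall>e\<in>E. finite e" and "u \<in> V" "k \<ge> 1"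
  shows "lam * x u ^ k = (\<Sum>e\<in>{e\<in>E. u \<in> e}. \<Prod>v\<in>e. x v)"
proof -
  have "lam * x u ^ k = x u * edge_sum E x u"
    using x assms(3,4) by (simp add: is_eigenvector_def power_eq_if)
  also have "\<dots> = (\<Sum>e\<in>{e\<in>E. u \<in> e}. \<Prod>v\<in>e. x v)"
    unfolding edge_sum_def sum_distrib_left using fin
    by (intro sum.cong refl) (auto intro!: prod.remove[symmetric])
  finally show ?thesis .
qed

section \<open>Eigenvalues of power hypergraphs\<close>

lemma edge_weight_balance_csqrt_real:
  fixes w :: "'a \<Rightarrow> complex" and t :: "'a set \<Rightarrow> complex"
  assumes W: "finite W" and F: "\<forall>e\<in>F. e \<subseteq> W \<and> card e = 2"
    and nonzero: "\<exists>a\<in>W. w a \<noteq> 0"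
    and balance: "\<And>a. a \<in> W \<Longrightarrow> (\<Sum>e\<in>{e\<in>F. a \<in> e}. t e) = w a"
    and square: "\<And>a b. {a, b} \<in> F \<Longrightarrow> t {a, b} \<noteq> 0 \<Longrightarrow> mu * t {a, b} ^ 2 = w a * w b"
  shows "csqrt mu \<in> \<real>"
proof (cases "mu = 0")
  case False
  define \<sigma> where "\<sigma> = csqrt mu"
  define \<rho> where "\<rho> a = csqrt (w a)" for a
  define g where "g a = cnj (\<rho> a) / \<rho> a" for a
  define R where "R = (\<Sum>a\<in>W. cmod (\<rho> a) ^ 2)"
  have finF: "finite F" using W F by (meson Pow_iff finite_Pow_iff finite_subset subsetI)
  have gw: "g a * w a = of_real (cmod (\<rho> a) ^ 2)" for a
  proof -
    have "w a = \<rho> a ^ 2" by (simp add: \<rho>_def)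
    then have "g a * w a = cnj (\<rho> a) * \<rho> a"
      by (cases "\<rho> a = 0") (simp_all add: g_def power2_eq_square)
    then show ?thesis by (metis complex_norm_square mult.commute)
  qed
  \<comment> \<open>Each edge contributes \<open>\<plusminus>(cnj (\<rho> a) * \<rho> b + \<rho> a * cnj (\<rho> b))\<close>, a real number.\<close>
  have edge_real: "(\<Sum>a\<in>e. g a * \<sigma> * t e) \<in> \<real>" if e: "e \<in> F" for e
  proof (cases "t e = 0")
    case t: False
    obtain a b where ab: "a \<noteq> b" "e = {a, b}" using e F card_2_iff by metis
    with square e t have sq: "mu * t e ^ 2 = w a * w b" by simp
    then have "(\<sigma> * t e) ^ 2 = (\<rho> a * \<rho> b) ^ 2"
      by (simp add: \<sigma>_def \<rho>_def power_mult_distrib)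
    then have pm: "\<sigma> * t e = \<rho> a * \<rho> b \<or> \<sigma> * t e = - (\<rho> a * \<rho> b)"
      by (simp add: power2_eq_iff)
    from sq t False have "\<rho> a \<noteq> 0" "\<rho> b \<noteq> 0" by (auto simp: \<rho>_def)
    then have "\<rho> a * \<rho> b * (g a + g b) = cnj (\<rho> a) * \<rho> b + cnj (cnj (\<rho> a) * \<rho> b)"
      by (simp add: g_def field_simps)
    then have "\<rho> a * \<rho> b * (g a + g b) \<in> \<real>" by (simp add: complex_is_Real_iff)
    moreover have "(\<Sum>x\<in>e. g x * \<sigma> * t e) = \<sigma> * t e * (g a + g b)"
      using ab by (simp add: algebra_simps)
    ultimately show ?thesis using pm by (auto simp del: complex_cnj_mult)
  qed (simp)
  have "\<sigma> * R = (\<Sum>a\<in>W. g a * \<sigma> * w a)"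
    unfolding R_def of_real_sum sum_distrib_left by (intro sum.cong refl) (simp add: gw ac_simps)
  also have "\<dots> = (\<Sum>a\<in>W. \<Sum>e\<in>{e\<in>F. a \<in> e}. g a * \<sigma> * t e)"
    by (intro sum.cong refl) (simp add: balance flip: sum_distrib_left)
  also have "\<dots> = (\<Sum>e\<in>F. \<Sum>a\<in>{a\<in>W. a \<in> e}. g a * \<sigma> * t e)"
    by (rule sum.swap_restrict[OF W finF])
  also have "\<dots> = (\<Sum>e\<in>F. \<Sum>a\<in>e. g a * \<sigma> * t e)"
    using F by (intro sum.cong refl) (auto intro!: arg_cong[where f="\<lambda>A. sum _ A"])
  finally have "\<sigma> * R \<in> \<real>" using edge_real by simp
  moreover have "R > 0"
  proof -
    obtain a where "a \<in> W" "w a \<noteq> 0" using nonzero by blast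
    then have "0 < cmod (\<rho> a) ^ 2" "cmod (\<rho> a) ^ 2 \<le> R"
      using W by (auto simp: \<rho>_def R_def intro: member_le_sum)
    then show ?thesis by linarith
  qed
  ultimately show ?thesis
    by (metis Reals_divide Reals_of_real \<sigma>_def nonzero_mult_div_cancel_right of_real_eq_0_iff
          order_less_irrefl)
qed simp

definition power_edge :: "nat \<Rightarrow> 'a set \<Rightarrow> ('a + 'a set \<times> nat) set" where
  "power_edge k e = Inl ` e \<union> {Inr (e, j) | j. j < k - 2}"

lemma power_edges_eq: "power_edges k F = power_edge k ` F"
  by (simp add: power_edges_def power_edge_def[abs_def])

lemma inj_power_edge: "inj (power_edge k)"
  by (rule inj_on_inverseI[where g="\<lambda>e'. Inl -` e'"]) (auto simp: power_edge_def)

lemma power_edge_added_vertices: "{Inr (e, j) | j. j < k - 2} = (\<lambda>j. Inr (e, j)) ` {..<k - 2}"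
  by auto

lemma finite_power_edge: "finite e \<Longrightarrow> finite (power_edge k e)"
  by (simp add: power_edge_def power_edge_added_vertices)

lemma prod_power_edge:
  assumes "finite e"
  shows "(\<Prod>u\<in>power_edge k e. y u) = (\<Prod>a\<in>e. y (Inl a)) * (\<Prod>j<k - 2. y (Inr (e, j)))"
  unfolding power_edge_def power_edge_added_vertices using assms
  by (subst prod.union_disjoint) (auto simp: prod.reindex inj_on_def)

lemma power_hypergraph_eigen_equations:
  assumes y: "is_eigenvector k (power_vertices k W F) (power_edges k F) lam y"
    and k: "k \<ge> 1" and fin: "\<forall>e\<in>F. finite e"
  shows power_leaf_equation:
      "e \<in> F \<Longrightarrow> j < k - 2 \<Longrightarrow> lam * y (Inr (e, j)) ^ k = (\<Prod>u\<in>power_edge k e. y u)"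
    and power_core_equation:
      "a \<in> W \<Longrightarrow> lam * y (Inl a) ^ k = (\<Sum>e\<in>{e\<in>F. a \<in> e}. \<Prod>u\<in>power_edge k e. y u)"
proof -
  have equation: "lam * y u ^ k = (\<Sum>e\<in>{e\<in>F. u \<in> power_edge k e}. \<Prod>u\<in>power_edge k e. y u)"
    if "u \<in> power_vertices k W F" for u
  proof -
    have "{e'\<in>power_edges k F. u \<in> e'} = power_edge k ` {e\<in>F. u \<in> power_edge k e}"
      by (auto simp: power_edges_eq)
    moreover have "\<forall>e'\<in>power_edges k F. finite e'"
      using fin by (auto simp: power_edges_eq finite_power_edge)
    ultimately show ?thesis
      using eigenvector_edge_products[OF y _ that k]
      by (simp add: sum.reindex[OF inj_on_subset[OF inj_power_edge subset_UNIV]])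
  qed
  show "lam * y (Inr (e, j)) ^ k = (\<Prod>u\<in>power_edge k e. y u)" if "e \<in> F" "j < k - 2"
  proof -
    have "{e'\<in>F. Inr (e, j) \<in> power_edge k e'} = {e}" using that by (auto simp: power_edge_def)
    with that show ?thesis using equation[of "Inr (e, j)"] by (simp add: power_vertices_def)
  qed
  show "lam * y (Inl a) ^ k = (\<Sum>e\<in>{e\<in>F. a \<in> e}. \<Prod>u\<in>power_edge k e. y u)" if "a \<in> W"
    using that equation[of "Inl a"] by (simp add: power_vertices_def power_edge_def image_iff)
qed

lemma power_edge_product_square:
  fixes y :: "'a + 'a set \<times> nat \<Rightarrow> complex"
  assumes k: "k \<ge> 2" and "a \<noteq> b"
    and leaf: "\<And>j. j < k - 2 \<Longrightarrow> lam * y (Inr ({a, b}, j)) ^ k = (\<Prod>u\<in>power_edge k {a, b}. y u)"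
    and nonzero: "(\<Prod>u\<in>power_edge k {a, b}. y u) \<noteq> 0"
  shows "lam ^ (k - 2) * (\<Prod>u\<in>power_edge k {a, b}. y u) ^ 2 = y (Inl a) ^ k * y (Inl b) ^ k"
proof -
  define P where "P = (\<Prod>u\<in>power_edge k {a, b}. y u)"
  have split: "z ^ k = z ^ (k - 2) * z ^ 2" for z :: complex
    using k by (metis le_add_diff_inverse2 power_add)
  have "lam ^ (k - 2) * P ^ k
          = y (Inl a) ^ k * y (Inl b) ^ k * (\<Prod>j<k - 2. lam * y (Inr ({a, b}, j)) ^ k)"
    using \<open>a \<noteq> b\<close> unfolding P_def
    by (simp add: prod_power_edge power_mult_distrib prod_power_distrib prod.distrib)
  also have "\<dots> = y (Inl a) ^ k * y (Inl b) ^ k * P ^ (k - 2)"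
    using leaf by (simp add: P_def)
  finally have "(lam ^ (k - 2) * P ^ 2) * P ^ (k - 2) = y (Inl a) ^ k * y (Inl b) ^ k * P ^ (k - 2)"
    by (simp add: split[of P] ac_simps)
  with nonzero show ?thesis by (simp add: P_def)
qed

lemma power_hypergraph_eigenvalue_power_real:
  assumes k: "k \<ge> 2" and W: "finite W" and F: "\<forall>e\<in>F. e \<subseteq> W \<and> card e = 2"
    and y: "is_eigenvector k (power_vertices k W F) (power_edges k F) lam y"
  shows "lam ^ k \<in> \<real>"
proof (cases "lam = 0")
  case False
  have fin: "\<forall>e\<in>F. finite e" using F W finite_subset by blast
  define P where "P e = (\<Prod>u\<in>power_edge k e. y u)" for e
  define w where "w a = y (Inl a) ^ k" for a
  define t where "t e = P e / lam" for e
  note leaf = power_leaf_equation[OF y _ fin] and core = power_core_equation[OF y _ fin]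
  have "csqrt (lam ^ k) \<in> \<real>"
  proof (rule edge_weight_balance_csqrt_real[OF W F])
    show "\<exists>a\<in>W. w a \<noteq> 0"
    proof (rule ccontr)
      assume "\<not> (\<exists>a\<in>W. w a \<noteq> 0)"
      then have "P e = 0" if "e \<in> F" for e
        using that F fin by (fastforce simp: P_def prod_power_edge w_def card_2_iff)
      then have "y u = 0" if "u \<in> power_vertices k W F" for u
        using that \<open>\<not> (\<exists>a\<in>W. w a \<noteq> 0)\<close> leaf False k
        by (auto simp: power_vertices_def w_def P_def)
      then show False using y by (auto simp: is_eigenvector_def)
    qed
    show "(\<Sum>e\<in>{e\<in>F. a \<in> e}. t e) = w a" if "a \<in> W" for a
      using core[OF _ that, symmetric] False k
      by (simp add: t_def w_def P_def flip: sum_divide_distrib)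
    show "lam ^ k * t {a, b} ^ 2 = w a * w b" if ab: "{a, b} \<in> F" "t {a, b} \<noteq> 0" for a b
    proof -
      have "a \<noteq> b" using ab F by fastforce
      moreover have "P {a, b} \<noteq> 0" using ab(2) by (simp add: t_def)
      ultimately have "lam ^ (k - 2) * P {a, b} ^ 2 = w a * w b"
        using power_edge_product_square[OF k _ leaf[OF _ ab(1)]] k by (simp add: P_def w_def)
      moreover have "lam ^ k = lam ^ (k - 2) * lam ^ 2"
        using k by (metis le_add_diff_inverse2 power_add)
      ultimately show ?thesis using False by (simp add: t_def power_divide)
    qed
  qed
  then show ?thesis by (metis Reals_power power2_csqrt)
qed simp

lemma eigenvalue_power_real_if_power_tree:
  fixes V :: "'a set"
  assumes uniform: "uniform_hypergraph k V E" and k: "k \<ge> 2"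
    and power: "power_tree k V E" and lam: "lam \<in> hg_spectrum k V E"
  shows "lam ^ k \<in> \<real>"
proof -
  obtain W :: "'a set" and F g where tree: "hypertree 2 W F"
    and g: "bij_betw g V (power_vertices k W F)"
    and edges: "power_edges k F = (\<lambda>e. g ` e) ` E"
    using power unfolding power_tree_def hg_isomorphic_def by blast
  obtain x where x: "is_eigenvector k V E lam x"
    using lam is_eigenvalue_iff_eigenvector[OF uniform] by (auto simp: hg_spectrum_def)
  have "\<forall>e\<in>E. e \<subseteq> V" using uniform by (simp add: uniform_hypergraph_def)
  from is_eigenvector_image[OF g this x]
  have "is_eigenvector k (power_vertices k W F) (power_edges k F) lam (x \<circ> inv_into V g)"
    by (simp only: edges)
  moreover have "finite W" "\<forall>e\<in>F. e \<subseteq> W \<and> card e = 2"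
    using tree by (simp_all add: hypertree_def uniform_hypergraph_def)
  ultimately show ?thesis using power_hypergraph_eigenvalue_power_real[OF k] by blast
qed

section \<open>Acyclic hypergraphs\<close>

lemma hg_acyclicD:
  assumes "hg_acyclic E" "length vs = length es" "length vs \<ge> 2" "distinct vs" "distinct es"
    "set es \<subseteq> E" "\<And>i. i < length vs \<Longrightarrow> vs ! i \<in> es ! i \<and> vs ! ((i + 1) mod length vs) \<in> es ! i"
  shows False
  using assms unfolding hg_acyclic_def berge_cycle_def by blast

lemma acyclic_edges_share_le_one:
  assumes "hg_acyclic E" "e \<in> E" "g \<in> E" "e \<noteq> g" "a \<in> e \<inter> g" "b \<in> e \<inter> g"
  shows "a = b"
proof (rule ccontr)
  assume "a \<noteq> b"
  show False
  proof (rule hg_acyclicD[OF assms(1), of "[a, b]" "[e, g]"])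
    show "[a, b] ! i \<in> [e, g] ! i \<and> [a, b] ! ((i + 1) mod length [a, b]) \<in> [e, g] ! i"
      if "i < length [a, b]" for i
      using that assms by (cases i) auto
  qed (use assms \<open>a \<noteq> b\<close> in auto)
qed

lemma acyclic_no_triangle:
  assumes "hg_acyclic E" "distinct [a, b, c]" "distinct [X, Y, Z]" "X \<in> E" "Y \<in> E" "Z \<in> E"
    "a \<in> X" "b \<in> X" "b \<in> Y" "c \<in> Y" "c \<in> Z" "a \<in> Z"
  shows False
proof (rule hg_acyclicD[OF assms(1), of "[a, b, c]" "[X, Y, Z]"])
  show "[a, b, c] ! i \<in> [X, Y, Z] ! i \<and> [a, b, c] ! ((i + 1) mod length [a, b, c]) \<in> [X, Y, Z] ! i"
    if "i < length [a, b, c]" for i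
  proof -
    from that have "i = 0 \<or> i = 1 \<or> i = 2" by auto
    then show ?thesis using assms by (elim disjE) simp_all
  qed
qed (use assms in \<open>simp_all del: distinct.simps\<close>)

lemma acyclic_no_quadrangle:
  assumes "hg_acyclic E" "distinct [a, b, c, d]" "distinct [X, Y, Z, U]"
    "X \<in> E" "Y \<in> E" "Z \<in> E" "U \<in> E"
    "a \<in> X" "b \<in> X" "b \<in> Y" "c \<in> Y" "c \<in> Z" "d \<in> Z" "d \<in> U" "a \<in> U"
  shows False
proof (rule hg_acyclicD[OF assms(1), of "[a, b, c, d]" "[X, Y, Z, U]"])
  show "[a, b, c, d] ! i \<in> [X, Y, Z, U] ! i
          \<and> [a, b, c, d] ! ((i + 1) mod length [a, b, c, d]) \<in> [X, Y, Z, U] ! i"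
    if "i < length [a, b, c, d]" for i
  proof -
    from that have "i = 0 \<or> i = 1 \<or> i = 2 \<or> i = 3" by auto
    then show ?thesis using assms by (elim disjE) simp_all
  qed
qed (use assms in \<open>simp_all del: distinct.simps\<close>)

lemma acyclic_transversal_adjacent:
  assumes ac: "hg_acyclic E" and E: "g \<in> E" "h \<in> E" "f \<in> E"
    and ne: "g \<noteq> h" "f \<noteq> g" "f \<noteq> h"
    and "v \<in> g \<inter> h" "u \<in> g \<inter> f" "w \<in> h \<inter> f"
  shows "u = w"
proof (rule ccontr)
  assume "u \<noteq> w"
  have "u \<noteq> v"
    using acyclic_edges_share_le_one[OF ac E(2,3) ne(3)[symmetric], of v w] assms \<open>u \<noteq> w\<close> by blast
  moreover have "w \<noteq> v"
    using acyclic_edges_share_le_one[OF ac E(1,3) ne(2)[symmetric], of v u] assms \<open>u \<noteq> w\<close> by blast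
  ultimately show False using acyclic_no_triangle[OF ac, of u v w g h f] assms \<open>u \<noteq> w\<close> by auto
qed

lemma acyclic_transversal_path:
  assumes ac: "hg_acyclic E" and E: "g \<in> E" "h \<in> E" "g' \<in> E" "f \<in> E"
    and ne: "distinct [g, h, g', f]"
    and "v \<in> g \<inter> h" "v' \<in> h \<inter> g'" "v \<noteq> v'" "u \<in> g \<inter> f" "w \<in> g' \<inter> f"
  shows "u = w"
proof (cases "u \<in> h \<or> w \<in> h")
  case True
  then show ?thesis
    using acyclic_transversal_adjacent[OF ac E(2,3,4), of v' u w]
      acyclic_transversal_adjacent[OF ac E(1,2,4), of v u w] assms by auto
next
  case False
  then show ?thesis
    using acyclic_no_quadrangle[OF ac, of u v v' w g h g' f] assms by auto
qed

lemma hg_acyclic_subedges: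
  assumes "hg_acyclic E" and "inj_on h F" and "\<And>C. C \<in> F \<Longrightarrow> h C \<in> E \<and> C \<subseteq> h C"
  shows "hg_acyclic F"
  unfolding hg_acyclic_def
proof
  assume "\<exists>vs es. berge_cycle F vs es"
  then obtain vs es where cycle: "berge_cycle F vs es" by blast
  then have len: "length es = length vs" and F: "set es \<subseteq> F" and "distinct es"
    by (auto simp: berge_cycle_def)
  have "berge_cycle E vs (map h es)"
    unfolding berge_cycle_def
  proof (intro conjI allI impI)
    show "distinct (map h es)"
      using \<open>distinct es\<close> F assms(2) by (simp add: distinct_map inj_on_subset)
    show "set (map h es) \<subseteq> E" using F assms(3) by auto
    fix i assume i: "i < length vs"
    then have "es ! i \<in> F" using F len by auto
    then have "es ! i \<subseteq> h (es ! i)" using assms(3) by blast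
    moreover have "vs ! i \<in> es ! i" "vs ! ((i + 1) mod length vs) \<in> es ! i"
      using cycle i unfolding berge_cycle_def by blast+
    ultimately show "vs ! i \<in> map h es ! i" "vs ! ((i + 1) mod length vs) \<in> map h es ! i"
      using i len by auto
  qed (use cycle in \<open>auto simp: berge_cycle_def\<close>)
  with assms(1) show False by (auto simp: hg_acyclic_def)
qed

lemma hg_connected_retract:
  assumes "hg_connected V E" and "W \<subseteq> V" "W \<noteq> {}" and "\<And>w. w \<in> W \<Longrightarrow> p w = w"
    and "\<And>e. e \<in> E \<Longrightarrow> \<exists>C\<in>F. p ` e \<subseteq> C"
  shows "hg_connected W F"
proof -
  let ?adjE = "{(a, b). \<exists>e\<in>E. a \<in> e \<and> b \<in> e}"
  let ?adjF = "{(a, b). \<exists>C\<in>F. a \<in> C \<and> b \<in> C}"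
  have walk: "(p a, p b) \<in> ?adjF\<^sup>*" if "(a, b) \<in> ?adjE\<^sup>*" for a b
    using that
  proof (induction rule: rtrancl_induct)
    case (step b c)
    then obtain e where "e \<in> E" "b \<in> e" "c \<in> e" by blast
    moreover obtain C where "C \<in> F" "p ` e \<subseteq> C" using assms(5)[OF \<open>e \<in> E\<close>] by blast
    ultimately have "(p b, p c) \<in> ?adjF" by blast
    with step.IH show ?case by (rule rtrancl_into_rtrancl)
  qed simp
  show ?thesis
    unfolding hg_connected_def
  proof (intro conjI ballI)
    show "W \<noteq> {}" by (rule assms(3))
    fix u w assume "u \<in> W" "w \<in> W"
    then have "(u, w) \<in> ?adjE\<^sup>*" using assms(1,2) unfolding hg_connected_def by blast
    then have "(p u, p w) \<in> ?adjF\<^sup>*" by (rule walk)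
    with \<open>u \<in> W\<close> \<open>w \<in> W\<close> show "(u, w) \<in> ?adjF\<^sup>*" using assms(4) by simp
  qed
qed

section \<open>An edge with three shared vertices\<close>

definition shared_vertex :: "'a set set \<Rightarrow> 'a \<Rightarrow> bool" where
  "shared_vertex E v \<longleftrightarrow> (\<exists>e\<in>E. \<exists>g\<in>E. e \<noteq> g \<and> v \<in> e \<and> v \<in> g)"

lemma cubic_root_cube_nonreal: "\<exists>z::complex. z ^ 3 = z ^ 2 + 1 \<and> z ^ 3 \<notin> \<real>"
proof -
  have "\<exists>r::real. 1 \<le> r \<and> r \<le> 2 \<and> r ^ 3 - r ^ 2 - 1 = 0"
    by (rule IVT') (auto intro!: continuous_intros)
  then obtain r :: real where r: "1 \<le> r" "r ^ 3 - r ^ 2 - 1 = 0" by blast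
  then have "r > 1" by (cases "r = 1") auto
  \<comment> \<open>Dividing out the real root \<open>r\<close> leaves \<open>z\<^sup>2 + (r - 1) z + r\<^sup>2 - r\<close>, whose discriminant
      \<open>-(r - 1)(3 r + 1)\<close> is negative.\<close>
  define a where "a = (1 - r) / 2"
  define b where "b = sqrt ((r - 1) * (3 * r + 1)) / 2"
  define z where "z = Complex a b"
  have b: "b > 0" "b ^ 2 = (r - 1) * (3 * r + 1) / 4"
    using \<open>r > 1\<close> by (auto simp: b_def power_divide)
  have quadratic: "z ^ 2 + of_real (r - 1) * z + of_real (r ^ 2 - r) = 0"
    using b(2) by (simp add: complex_eq_iff z_def a_def power2_eq_square field_simps)
  have "z ^ 3 - z ^ 2 - 1
          = (z - of_real r) * (z ^ 2 + of_real (r - 1) * z + of_real (r ^ 2 - r))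
            + of_real (r ^ 3 - r ^ 2 - 1)"
    by (simp add: algebra_simps power2_eq_square power3_eq_cube)
  then have z3: "z ^ 3 = z ^ 2 + 1" using quadratic r(2) by (simp add: diff_eq_eq add.commute)
  have "Im (z ^ 2) \<noteq> 0"
    using b(1) \<open>r > 1\<close> by (simp add: z_def a_def power2_eq_square)
  then have "z ^ 3 - 1 \<notin> \<real>" using z3 complex_is_Real_iff by auto
  then have "z ^ 3 \<notin> \<real>" by (metis Reals_1 Reals_diff)
  with z3 show ?thesis by blast
qed

locale branching_edge =
  fixes k :: nat and V :: "'a set" and E :: "'a set set"
    and e :: "'a set" and v :: "nat \<Rightarrow> 'a" and f :: "nat \<Rightarrow> 'a set"
  assumes uniform: "uniform_hypergraph k V E" and acyclic: "hg_acyclic E"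
    and e: "e \<in> E" and v_inj: "inj_on v {..<3}" and v_in_e: "\<And>i. i < 3 \<Longrightarrow> v i \<in> e"
    and f: "\<And>i. i < 3 \<Longrightarrow> f i \<in> E" and f_ne_e: "\<And>i. i < 3 \<Longrightarrow> f i \<noteq> e"
    and v_in_f: "\<And>i. i < 3 \<Longrightarrow> v i \<in> f i"
begin

abbreviation branch_vertices :: "'a set" where "branch_vertices \<equiv> v ` {..<3}"

abbreviation support :: "'a set" where "support \<equiv> e \<union> (\<Union>i<3. f i)"

lemma finite_edge: "g \<in> E \<Longrightarrow> finite g"
  using uniform_hypergraph_finite_edges(2)[OF uniform] .

lemma card_edge: "g \<in> E \<Longrightarrow> card g = k"
  using uniform by (simp add: uniform_hypergraph_def)

lemma card_branch_vertices: "card branch_vertices = 3"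
  using v_inj by (simp add: card_image)

lemma branch_vertices_subset: "branch_vertices \<subseteq> e"
  using v_in_e by blast

lemma k_ge_3: "k \<ge> 3"
  using card_mono[OF finite_edge[OF e] branch_vertices_subset] card_branch_vertices card_edge[OF e]
  by simp

lemma f_meets_e_at_v: "i < 3 \<Longrightarrow> u \<in> f i \<Longrightarrow> u \<in> e \<Longrightarrow> u = v i"
  using acyclic_edges_share_le_one[OF acyclic e f] f_ne_e v_in_e v_in_f by blast

lemma v_ne: "i < 3 \<Longrightarrow> j < 3 \<Longrightarrow> i \<noteq> j \<Longrightarrow> v i \<noteq> v j"
  using v_inj by (auto dest: inj_onD)

lemma v_notin_f: "i < 3 \<Longrightarrow> j < 3 \<Longrightarrow> i \<noteq> j \<Longrightarrow> v i \<notin> f j"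
  using f_meets_e_at_v[of j "v i"] v_in_e v_ne by blast

lemma f_ne: "i < 3 \<Longrightarrow> j < 3 \<Longrightarrow> i \<noteq> j \<Longrightarrow> f i \<noteq> f j"
  using v_notin_f v_in_f by metis

lemma f_disjoint:
  assumes ij: "i < 3" "j < 3" "i \<noteq> j"
  shows "f i \<inter> f j = {}"
proof (intro equals0I)
  fix u assume u: "u \<in> f i \<inter> f j"
  have "v i = u"
    using acyclic_transversal_adjacent[OF acyclic e f[OF ij(2)] f[OF ij(1)], of "v j" "v i" u]
      f_ne[OF ij] f_ne_e ij v_in_e v_in_f u by auto
  moreover have "v j = u"
    using acyclic_transversal_adjacent[OF acyclic e f[OF ij(1)] f[OF ij(2)], of "v i" "v j" u]
      f_ne[OF ij] f_ne_e ij v_in_e v_in_f u by auto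
  ultimately show False using v_ne[OF ij] by simp
qed

lemma outer_edge_meets_support_once:
  assumes g: "g \<in> E" "g \<noteq> e" "\<And>i. i < 3 \<Longrightarrow> g \<noteq> f i"
    and uw: "u \<in> g \<inter> support" "w \<in> g \<inter> support"
  shows "u = w"
proof -
  have adjacent: "a = b" if "i < 3" "a \<in> g \<inter> e" "b \<in> g \<inter> f i" for i a b
    using acyclic_transversal_adjacent[OF acyclic e f[OF that(1)] g(1), of "v i" a b]
      that g f_ne_e v_in_e v_in_f by auto
  have path: "a = b" if "i < 3" "j < 3" "i \<noteq> j" "a \<in> g \<inter> f i" "b \<in> g \<inter> f j" for i j a b
  proof -
    have "distinct [f i, e, f j, g]" using that g f_ne_e f_ne by auto
    from acyclic_transversal_path[OF acyclic f[OF that(1)] e f[OF that(2)] g(1) this,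
        of "v i" "v j" a b]
    show ?thesis using that v_in_e v_in_f v_ne by blast
  qed
  have same: "a = b" if "h \<in> E" "g \<noteq> h" "a \<in> g \<inter> h" "b \<in> g \<inter> h" for h a b
    using acyclic_edges_share_le_one[OF acyclic g(1) that] .
  from uw consider "u \<in> e" "w \<in> e" | i where "i < 3" "u \<in> e" "w \<in> f i"
    | i where "i < 3" "u \<in> f i" "w \<in> e" | i j where "i < 3" "j < 3" "u \<in> f i" "w \<in> f j"
    by blast
  then show ?thesis
  proof cases
    case 1
    then show ?thesis using same[OF e g(2)] uw by blast
  next
    case (2 i)
    then show ?thesis using adjacent[of i u w] uw by blast
  next
    case (3 i)
    then show ?thesis using adjacent[of i w u] uw by blast
  next
    case (4 i j)
    then show ?thesis using path[of i j u w] same[OF f g(3), of i u w] uw by (cases "i = j") auto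
  qed
qed

text \<open>With \<open>\<lambda> = s\<^sup>3\<close>, the equations at the pendant vertices of the \<open>f i\<close> force the value
  \<open>s\<^sup>3\<close> on the branch vertices, those at the other vertices of \<open>e\<close> force \<open>s\<^sup>2\<close> there, and
  the equation at a branch vertex becomes \<open>z\<^sup>3 = z\<^sup>2 + 1\<close> for \<open>z = s\<^sup>k\<close>.\<close>

definition branch_vector :: "complex \<Rightarrow> 'a \<Rightarrow> complex" where
  "branch_vector s u = (if u \<in> branch_vertices then s ^ 3 else if u \<in> e then s ^ 2
                        else if u \<in> support then 1 else 0)"

lemma branch_vector_outside: "u \<notin> support \<Longrightarrow> branch_vector s u = 0"
  using branch_vertices_subset by (auto simp: branch_vector_def)

lemma branch_vector_pendant: "i < 3 \<Longrightarrow> u \<in> f i \<Longrightarrow> u \<noteq> v i \<Longrightarrow> branch_vector s u = 1"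
  using f_meets_e_at_v branch_vertices_subset by (auto simp: branch_vector_def)

lemma edge_sum_branch_vector:
  "edge_sum E (branch_vector s) u
     = (\<Sum>g\<in>{g\<in>insert e (f ` {..<3}). u \<in> g}. \<Prod>w\<in>g - {u}. branch_vector s w)"
  unfolding edge_sum_def
proof (rule sum.mono_neutral_right)
  show "finite {g\<in>E. u \<in> g}" using uniform_hypergraph_finite_edges(1)[OF uniform] by simp
  show "{g\<in>insert e (f ` {..<3}). u \<in> g} \<subseteq> {g\<in>E. u \<in> g}" using e f by auto
  show "\<forall>g\<in>{g\<in>E. u \<in> g} - {g\<in>insert e (f ` {..<3}). u \<in> g}.
          (\<Prod>w\<in>g - {u}. branch_vector s w) = 0"
  proof
    fix g assume g: "g \<in> {g\<in>E. u \<in> g} - {g\<in>insert e (f ` {..<3}). u \<in> g}"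
    then have "card (g - {u}) \<ge> 2" using card_edge[of g] k_ge_3 by simp
    then obtain B where "B \<subseteq> g - {u}" "card B = 2" by (meson obtain_subset_with_card_n)
    then obtain a b where ab: "a \<in> g - {u}" "b \<in> g - {u}" "a \<noteq> b" by (auto simp: card_2_iff)
    then have "a \<notin> support \<or> b \<notin> support"
      using outer_edge_meets_support_once[of g a b] g by blast
    then have "\<exists>w\<in>g - {u}. branch_vector s w = 0" using ab branch_vector_outside by blast
    then show "(\<Prod>w\<in>g - {u}. branch_vector s w) = 0" using g finite_edge by auto
  qed
qed

lemma prod_branch_vector_e:
  assumes "u \<in> e"
  shows "(\<Prod>w\<in>e - {u}. branch_vector s w)
           = (s ^ 3) ^ card (branch_vertices - {u}) * (s ^ 2) ^ card (e - branch_vertices - {u})"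
proof -
  have "e - {u} = (branch_vertices - {u}) \<union> (e - branch_vertices - {u})"
    using branch_vertices_subset by blast
  moreover have "finite (e - branch_vertices - {u})" using finite_edge[OF e] by blast
  ultimately have "(\<Prod>w\<in>e - {u}. branch_vector s w)
      = (\<Prod>w\<in>branch_vertices - {u}. branch_vector s w)
        * (\<Prod>w\<in>e - branch_vertices - {u}. branch_vector s w)"
    by (simp add: prod.union_disjoint Diff_eq Int_ac)
  also have "(\<Prod>w\<in>branch_vertices - {u}. branch_vector s w) = (\<Prod>w\<in>branch_vertices - {u}. s ^ 3)"
    by (rule prod.cong) (auto simp: branch_vector_def)
  also have "(\<Prod>w\<in>e - branch_vertices - {u}. branch_vector s w)
               = (\<Prod>w\<in>e - branch_vertices - {u}. s ^ 2)"
    by (rule prod.cong) (auto simp: branch_vector_def)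
  finally show ?thesis by simp
qed

lemma card_e_minus_branch_vertices: "card (e - branch_vertices) = k - 3"
  using card_branch_vertices card_edge[OF e] finite_edge[OF e] branch_vertices_subset
  by (simp add: card_Diff_subset)

lemma edge_sum_branch_vector_at_branch_vertex:
  assumes i: "i < 3"
  shows "edge_sum E (branch_vector s) (v i) = (s ^ k) ^ 2 + 1"
proof -
  have "{g\<in>insert e (f ` {..<3}). v i \<in> g} = {e, f i}"
    using i v_in_e v_in_f v_notin_f by auto
  moreover have "card (branch_vertices - {v i}) = 2"
    using i card_branch_vertices by (simp add: card_Diff_singleton)
  moreover have "e - branch_vertices - {v i} = e - branch_vertices" using i by auto
  moreover have "(\<Prod>w\<in>f i - {v i}. branch_vector s w) = 1"
    using i branch_vector_pendant by (intro prod.neutral) blast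
  moreover have "s ^ 6 * (s ^ 2) ^ (k - 3) = (s ^ k) ^ 2"
    using k_ge_3 by (simp flip: power_mult power_add) (simp add: algebra_simps)
  ultimately show ?thesis
    using i f_ne_e[OF i] v_in_e prod_branch_vector_e[of "v i" s] card_e_minus_branch_vertices
    by (simp add: edge_sum_branch_vector power_mult)
qed

lemma edge_sum_branch_vector_on_e:
  assumes u: "u \<in> e" "u \<notin> branch_vertices"
  shows "edge_sum E (branch_vector s) u = s ^ 3 * (s ^ 2) ^ (k - 1)"
proof -
  have "u \<notin> f j" if "j < 3" for j using f_meets_e_at_v[OF that _ u(1)] u(2) that by blast
  then have "{g\<in>insert e (f ` {..<3}). u \<in> g} = {e}" using u by blast
  moreover have "card (e - branch_vertices - {u}) = k - 4"
    using u card_e_minus_branch_vertices finite_edge[OF e] by simp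
  moreover have "k \<ge> 4"
    using u card_e_minus_branch_vertices card_Diff1_less[of "e - branch_vertices" u]
      finite_edge[OF e] by auto
  then have "(s ^ 3) ^ 3 * (s ^ 2) ^ (k - 4) = s ^ 3 * (s ^ 2) ^ (k - 1)"
    by (simp flip: power_mult power_add) (simp add: algebra_simps)
  ultimately show ?thesis
    using u card_branch_vertices prod_branch_vector_e[of u s] by (simp add: edge_sum_branch_vector)
qed

lemma edge_sum_branch_vector_on_pendant:
  assumes i: "i < 3" and u: "u \<in> f i" "u \<noteq> v i"
  shows "edge_sum E (branch_vector s) u = s ^ 3"
proof -
  have "j = i" if "j < 3" "u \<in> f j" for j using f_disjoint[of j i] i u that by blast
  moreover have "u \<notin> e" using f_meets_e_at_v[OF i u(1)] u(2) by blast
  ultimately have "{g\<in>insert e (f ` {..<3}). u \<in> g} = {f i}" using i u by blast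
  moreover have "(\<Prod>w\<in>f i - {u}. branch_vector s w)
                   = branch_vector s (v i) * (\<Prod>w\<in>f i - {u} - {v i}. branch_vector s w)"
    using i u v_in_f finite_edge[OF f[OF i]] by (intro prod.remove) auto
  moreover have "(\<Prod>w\<in>f i - {u} - {v i}. branch_vector s w) = 1"
    using i branch_vector_pendant by (intro prod.neutral) blast
  ultimately show ?thesis using i by (simp add: edge_sum_branch_vector branch_vector_def)
qed

lemma edge_sum_branch_vector_outside:
  assumes "u \<notin> support"
  shows "edge_sum E (branch_vector s) u = 0"
proof -
  have "{g\<in>insert e (f ` {..<3}). u \<in> g} = {}" using assms by auto
  then show ?thesis by (simp only: edge_sum_branch_vector sum.empty)
qed

lemma is_eigenvector_branch_vector:
  assumes z: "(s ^ k) ^ 3 = (s ^ k) ^ 2 + 1"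
  shows "is_eigenvector k V E (s ^ 3) (branch_vector s)"
  unfolding is_eigenvector_def
proof (intro conjI ballI)
  have "s \<noteq> 0" using z k_ge_3 by (cases "s = 0") (simp_all add: zero_power)
  moreover have "v 0 \<in> V" using v_in_e[of 0] e uniform by (auto simp: uniform_hypergraph_def)
  ultimately show "\<exists>u\<in>V. branch_vector s u \<noteq> 0"
    by (intro bexI[of _ "v 0"]) (auto simp: branch_vector_def)
next
  fix u assume "u \<in> V"
  consider i where "i < 3" "u = v i" | "u \<in> e" "u \<notin> branch_vertices"
    | i where "i < 3" "u \<in> f i" "u \<noteq> v i" "u \<notin> e" | "u \<notin> support"
    by blast
  then show "edge_sum E (branch_vector s) u = s ^ 3 * branch_vector s u ^ (k - 1)"
  proof cases
    case (1 i)
    have "s ^ 3 * (s ^ 3) ^ (k - 1) = (s ^ 3) ^ Suc (k - 1)" by simp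
    also have "Suc (k - 1) = k" using k_ge_3 by simp
    finally have "s ^ 3 * (s ^ 3) ^ (k - 1) = (s ^ k) ^ 3"
      by (simp flip: power_mult add: mult.commute)
    with 1 z show ?thesis by (simp add: edge_sum_branch_vector_at_branch_vertex branch_vector_def)
  next
    case 2
    then show ?thesis by (simp add: edge_sum_branch_vector_on_e branch_vector_def)
  next
    case (3 i)
    then show ?thesis by (simp add: edge_sum_branch_vector_on_pendant branch_vector_pendant)
  next
    case 4
    then show ?thesis
      using k_ge_3 by (simp add: edge_sum_branch_vector_outside branch_vector_outside)
  qed
qed

lemma nonreal_eigenvalue: "\<exists>lam\<in>hg_spectrum k V E. lam ^ k \<notin> \<real>"
proof -
  obtain z :: complex where z: "z ^ 3 = z ^ 2 + 1" "z ^ 3 \<notin> \<real>"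
    using cubic_root_cube_nonreal by blast
  obtain s where s: "z = s ^ k"
    using exists_complex_root[of k z] k_ge_3 by auto
  have "s ^ 3 \<in> hg_spectrum k V E"
    using is_eigenvector_branch_vector[of s] z s
    by (auto simp: hg_spectrum_def is_eigenvalue_iff_eigenvector[OF uniform])
  moreover have "(s ^ 3) ^ k = z ^ 3" by (simp add: s flip: power_mult) (simp add: mult.commute)
  ultimately show ?thesis using z(2) by metis
qed

end

lemma nonreal_eigenvalue_if_three_shared_vertices:
  assumes uniform: "uniform_hypergraph k V E" and acyclic: "hg_acyclic E"
    and e: "e \<in> E" and shared: "card {v\<in>e. shared_vertex E v} \<ge> 3"
  shows "\<exists>lam\<in>hg_spectrum k V E. lam ^ k \<notin> \<real>"
proof -
  obtain T where T: "T \<subseteq> {v\<in>e. shared_vertex E v}" "card T = 3"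
    using obtain_subset_with_card_n[OF shared] by blast
  moreover have "finite T" using T(2) card.infinite by force
  ultimately obtain v :: "nat \<Rightarrow> 'a" where v: "bij_betw v {..<3} T"
    using ex_bij_betw_nat_finite[of T] by (auto simp: atLeast0LessThan)
  define f where "f i = (SOME g. g \<in> E \<and> g \<noteq> e \<and> v i \<in> g)" for i
  have ex_g: "\<exists>g. g \<in> E \<and> g \<noteq> e \<and> v i \<in> g" if "i < 3" for i
  proof -
    have "shared_vertex E (v i)" using that v T by (auto simp: bij_betw_def)
    then show ?thesis unfolding shared_vertex_def by blast
  qed
  have f: "f i \<in> E \<and> f i \<noteq> e \<and> v i \<in> f i" if "i < 3" for i
    using ex_g[OF that] unfolding f_def by (rule someI_ex)
  interpret branching_edge k V E e v f
    using uniform acyclic e v T f by unfold_locales (auto simp: bij_betw_def)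
  show ?thesis by (rule nonreal_eigenvalue)
qed

section \<open>Hypertrees with at most two shared vertices per edge\<close>

locale hypertree_two_shared =
  fixes k :: nat and V :: "'a set" and E :: "'a set set"
  assumes hypertree: "hypertree k V E" and k: "k \<ge> 2"
    and two_shared: "\<And>e. e \<in> E \<Longrightarrow> card {v\<in>e. shared_vertex E v} \<le> 2"
begin

lemma uniform: "uniform_hypergraph k V E"
  using hypertree by (simp add: hypertree_def)

lemma edge_subset: "e \<in> E \<Longrightarrow> e \<subseteq> V"
  using uniform by (simp add: uniform_hypergraph_def)

lemma card_edge: "e \<in> E \<Longrightarrow> card e = k"
  using uniform by (simp add: uniform_hypergraph_def)

lemma finite_edge: "e \<in> E \<Longrightarrow> finite e"
  using uniform finite_subset by (auto simp: uniform_hypergraph_def)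

text \<open>\<open>core e\<close> is the edge of the tree \<open>T\<close> inside \<open>e\<close>; the other \<open>k - 2\<close> vertices of \<open>e\<close>
  play the role of the vertices added to it in \<open>T\<^sup>k\<close>.\<close>

definition core :: "'a set \<Rightarrow> 'a set" where
  "core e = (SOME C. {v\<in>e. shared_vertex E v} \<subseteq> C \<and> C \<subseteq> e \<and> card C = 2)"

lemma core_spec:
  assumes "e \<in> E"
  shows "{v\<in>e. shared_vertex E v} \<subseteq> core e \<and> core e \<subseteq> e \<and> card (core e) = 2"
proof -
  have "\<exists>C. {v\<in>e. shared_vertex E v} \<subseteq> C \<and> C \<subseteq> e \<and> card C = 2"
    using two_shared[OF assms] card_edge[OF assms] finite_edge[OF assms] k
    by (intro exists_subset_between) auto
  then show ?thesis unfolding core_def by (rule someI_ex)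
qed

lemma shared_vertex_in_core: "e \<in> E \<Longrightarrow> v \<in> e \<Longrightarrow> shared_vertex E v \<Longrightarrow> v \<in> core e"
  using core_spec by blast

lemma core_subset: "e \<in> E \<Longrightarrow> core e \<subseteq> e"
  using core_spec by blast

lemma card_core: "e \<in> E \<Longrightarrow> card (core e) = 2"
  using core_spec by blast

lemma edge_unique_off_core:
  assumes "e \<in> E" "v \<in> e" "v \<notin> core e" "g \<in> E" "v \<in> g"
  shows "g = e"
  using assms shared_vertex_in_core[of e v] unfolding shared_vertex_def by blast

lemma inj_on_core: "inj_on core E"
proof (rule inj_onI)
  fix e g assume eg: "e \<in> E" "g \<in> E" "core e = core g"
  obtain a b where ab: "core e = {a, b}" "a \<noteq> b" using card_core[OF eg(1)] card_2_iff by metis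
  have "a \<in> e \<inter> g" "b \<in> e \<inter> g" using ab eg core_subset by auto
  then show "e = g"
    using acyclic_edges_share_le_one[of E e g a b] hypertree eg ab(2) by (auto simp: hypertree_def)
qed

text \<open>The isolated vertices occur only in the one-vertex hypertree, where \<open>E = {}\<close>.\<close>

definition tree_vertices :: "'a set" where
  "tree_vertices = \<Union>(core ` E) \<union> {v\<in>V. \<forall>e\<in>E. v \<notin> e}"

definition tree_edges :: "'a set set" where
  "tree_edges = core ` E"

lemma tree_vertex_iff_core:
  assumes "e \<in> E" "v \<in> e"
  shows "v \<in> tree_vertices \<longleftrightarrow> v \<in> core e"
proof
  assume "v \<in> tree_vertices"
  then obtain g where "g \<in> E" "v \<in> core g" using assms unfolding tree_vertices_def by blast
  show "v \<in> core e"
  proof (rule ccontr)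
    assume "v \<notin> core e"
    then have "g = e"
      using edge_unique_off_core[OF assms _ \<open>g \<in> E\<close>] core_subset[OF \<open>g \<in> E\<close>] \<open>v \<in> core g\<close> by blast
    with \<open>v \<in> core g\<close> \<open>v \<notin> core e\<close> show False by simp
  qed
qed (use assms in \<open>auto simp: tree_vertices_def\<close>)

lemma tree_vertices_subset: "tree_vertices \<subseteq> V"
  unfolding tree_vertices_def using core_subset edge_subset by blast

definition home_edge :: "'a \<Rightarrow> 'a set" where
  "home_edge v = (SOME e. e \<in> E \<and> v \<in> e)"

lemma home_edge_eq:
  assumes "e \<in> E" "v \<in> e" "v \<notin> core e"
  shows "home_edge v = e"
proof -
  have "\<exists>g. g \<in> E \<and> v \<in> g" using assms by blast
  then have "home_edge v \<in> E \<and> v \<in> home_edge v" unfolding home_edge_def by (rule someI_ex)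
  then show ?thesis using edge_unique_off_core[OF assms] by blast
qed

lemma off_tree_vertex:
  assumes "v \<in> V" "v \<notin> tree_vertices"
  obtains e where "e \<in> E" "v \<in> e" "v \<notin> core e"
proof -
  from assms obtain e where "e \<in> E" "v \<in> e" unfolding tree_vertices_def by blast
  moreover from calculation have "v \<notin> core e" using tree_vertex_iff_core assms(2) by blast
  ultimately show thesis by (rule that)
qed

definition pendant_index :: "'a set \<Rightarrow> 'a \<Rightarrow> nat" where
  "pendant_index e = (SOME h. bij_betw h (e - core e) {..<k - 2})"

lemma pendant_index_bij:
  assumes "e \<in> E"
  shows "bij_betw (pendant_index e) (e - core e) {..<k - 2}"
proof -
  have "finite (core e)" using finite_subset[OF core_subset[OF assms] finite_edge[OF assms]] .
  then have "card (e - core e) = k - 2"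
    using core_subset[OF assms] card_core[OF assms] card_edge[OF assms]
    by (simp add: card_Diff_subset)
  then have "\<exists>h. bij_betw h (e - core e) {..<k - 2}"
    using ex_bij_betw_finite_nat[of "e - core e"] finite_edge[OF assms]
    by (auto simp: atLeast0LessThan)
  then show ?thesis unfolding pendant_index_def by (rule someI_ex)
qed

definition to_power :: "'a \<Rightarrow> 'a + 'a set \<times> nat" where
  "to_power v = (if v \<in> tree_vertices then Inl v
                 else Inr (core (home_edge v), pendant_index (home_edge v) v))"

lemma to_power_off_core:
  assumes "e \<in> E" "v \<in> e" "v \<notin> core e"
  shows "to_power v = Inr (core e, pendant_index e v)"
proof -
  have "v \<notin> tree_vertices" using tree_vertex_iff_core[OF assms(1,2)] assms(3) by blast
  then show ?thesis using home_edge_eq[OF assms] by (simp add: to_power_def)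
qed

lemma to_power_tree_vertex: "v \<in> tree_vertices \<Longrightarrow> to_power v = Inl v"
  by (simp add: to_power_def)

lemma image_to_power_edge:
  assumes e: "e \<in> E"
  shows "to_power ` e = power_edge k (core e)"
proof -
  have "to_power ` e = to_power ` core e \<union> to_power ` (e - core e)"
    using core_subset[OF e] by blast
  also have "to_power ` core e = Inl ` core e"
    using core_subset[OF e] tree_vertex_iff_core[OF e] to_power_tree_vertex
    by (intro image_cong) auto
  also have "to_power ` (e - core e) = (\<lambda>j. Inr (core e, j)) ` pendant_index e ` (e - core e)"
    unfolding image_image using to_power_off_core[OF e] by (intro image_cong) auto
  also have "pendant_index e ` (e - core e) = {..<k - 2}"
    using pendant_index_bij[OF e] by (simp add: bij_betw_def)
  finally show ?thesis by (simp add: power_edge_def power_edge_added_vertices)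
qed

lemma power_edges_image: "(\<lambda>e. to_power ` e) ` E = power_edges k tree_edges"
  unfolding power_edges_eq tree_edges_def image_image using image_to_power_edge
  by (intro image_cong) auto

lemma inj_on_to_power: "inj_on to_power V"
proof (rule inj_onI)
  fix v w assume vw: "v \<in> V" "w \<in> V" "to_power v = to_power w"
  show "v = w"
  proof (cases "v \<in> tree_vertices \<or> w \<in> tree_vertices")
    case True
    with vw(3) show ?thesis by (auto simp: to_power_def split: if_splits)
  next
    case False
    then obtain e g where e: "e \<in> E" "v \<in> e" "v \<notin> core e" and g: "g \<in> E" "w \<in> g" "w \<notin> core g"
      using off_tree_vertex vw(1,2) by metis
    with vw(3) have "core e = core g" "pendant_index e v = pendant_index g w"
      by (simp_all add: to_power_off_core)
    moreover from this(1) have "e = g" using inj_on_core e(1) g(1) by (auto dest: inj_onD)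
    ultimately show ?thesis
      using pendant_index_bij[OF e(1)] e g by (auto simp: bij_betw_def dest: inj_onD)
  qed
qed

lemma image_to_power: "to_power ` V = power_vertices k tree_vertices tree_edges"
proof (intro equalityI subsetI)
  fix x assume "x \<in> to_power ` V"
  then obtain v where v: "v \<in> V" "x = to_power v" by blast
  show "x \<in> power_vertices k tree_vertices tree_edges"
  proof (cases "v \<in> tree_vertices")
    case True
    then show ?thesis using v by (simp add: power_vertices_def to_power_tree_vertex)
  next
    case False
    then obtain e where e: "e \<in> E" "v \<in> e" "v \<notin> core e" using off_tree_vertex v(1) by metis
    then have "x \<in> to_power ` e" using v by blast
    then show ?thesis
      using e(1) unfolding image_to_power_edge[OF e(1)] power_edge_def power_vertices_def
      by (auto simp: tree_edges_def tree_vertices_def)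
  qed
next
  fix x assume "x \<in> power_vertices k tree_vertices tree_edges"
  then consider a where "a \<in> tree_vertices" "x = Inl a"
    | e j where "e \<in> E" "j < k - 2" "x = Inr (core e, j)"
    unfolding power_vertices_def tree_edges_def by blast
  then show "x \<in> to_power ` V"
  proof cases
    case 1
    then have "x = to_power a" "a \<in> V"
      using tree_vertices_subset by (auto simp: to_power_tree_vertex)
    then show ?thesis by blast
  next
    case (2 e j)
    then have "x \<in> to_power ` e" by (simp add: image_to_power_edge power_edge_def)
    then show ?thesis using edge_subset[OF 2(1)] by blast
  qed
qed

lemma tree_uniform: "uniform_hypergraph 2 tree_vertices tree_edges"
  using finite_subset[OF tree_vertices_subset] uniform core_subset card_core
  unfolding uniform_hypergraph_def tree_edges_def tree_vertices_def by blast

lemma tree_acyclic: "hg_acyclic tree_edges"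
proof (rule hg_acyclic_subedges)
  show "hg_acyclic E" using hypertree by (simp add: hypertree_def)
  show "inj_on (inv_into E core) tree_edges"
    unfolding tree_edges_def by (rule inj_on_inv_into) simp
  show "inv_into E core C \<in> E \<and> C \<subseteq> inv_into E core C" if C: "C \<in> tree_edges" for C
  proof -
    obtain e where "e \<in> E" "C = core e" using C unfolding tree_edges_def by blast
    then show ?thesis using inj_on_core core_subset by (simp add: inv_into_f_f)
  qed
qed

definition retract :: "'a \<Rightarrow> 'a" where
  "retract v = (if v \<in> tree_vertices then v else (SOME a. a \<in> core (home_edge v)))"

lemma retract_edge: "e \<in> E \<Longrightarrow> retract ` e \<subseteq> core e"
proof
  fix x assume "e \<in> E" "x \<in> retract ` e"
  then obtain v where v: "v \<in> e" "x = retract v" by blast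
  show "x \<in> core e"
  proof (cases "v \<in> core e")
    case True
    then show ?thesis using v tree_vertex_iff_core[OF \<open>e \<in> E\<close>] by (simp add: retract_def)
  next
    case False
    have "core e \<noteq> {}" using card_core[OF \<open>e \<in> E\<close>] by auto
    then show ?thesis
      using v False tree_vertex_iff_core[OF \<open>e \<in> E\<close> v(1)] home_edge_eq[OF \<open>e \<in> E\<close> v(1) False]
      by (simp add: retract_def some_in_eq)
  qed
qed

lemma tree_connected: "hg_connected tree_vertices tree_edges"
proof (rule hg_connected_retract)
  show "hg_connected V E" using hypertree by (simp add: hypertree_def)
  show "tree_vertices \<subseteq> V" by (rule tree_vertices_subset)
  show "retract w = w" if "w \<in> tree_vertices" for w using that by (simp add: retract_def)
  show "\<exists>C\<in>tree_edges. retract ` e \<subseteq> C" if "e \<in> E" for e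
    using that retract_edge unfolding tree_edges_def by blast
  obtain v where "v \<in> V" using \<open>hg_connected V E\<close> by (auto simp: hg_connected_def)
  show "tree_vertices \<noteq> {}"
  proof (cases "\<exists>e\<in>E. v \<in> e")
    case True
    then obtain e where "e \<in> E" by blast
    then show ?thesis using card_core unfolding tree_vertices_def by fastforce
  next
    case False
    then show ?thesis using \<open>v \<in> V\<close> unfolding tree_vertices_def by blast
  qed
qed

theorem power_tree: "power_tree k V E"
  unfolding power_tree_def hg_isomorphic_def hypertree_def
  using tree_uniform tree_connected tree_acyclic inj_on_to_power image_to_power
    power_edges_image[symmetric] by (blast intro: bij_betw_imageI)

end

lemma power_tree_if_eigenvalue_powers_real:
  assumes H: "hypertree k V E" and k: "k \<ge> 2" and real: "\<forall>lam\<in>hg_spectrum k V E. lam ^ k \<in> \<real>"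
  shows "power_tree k V E"
proof (rule hypertree_two_shared.power_tree[OF hypertree_two_shared.intro[OF H k]])
  fix e assume "e \<in> E"
  show "card {v\<in>e. shared_vertex E v} \<le> 2"
  proof (rule ccontr)
    assume "\<not> card {v\<in>e. shared_vertex E v} \<le> 2"
    then have "card {v\<in>e. shared_vertex E v} \<ge> 3" by simp
    moreover have "uniform_hypergraph k V E" "hg_acyclic E" using H by (simp_all add: hypertree_def)
    ultimately obtain lam where "lam \<in> hg_spectrum k V E" "lam ^ k \<notin> \<real>"
      using nonreal_eigenvalue_if_three_shared_vertices \<open>e \<in> E\<close> by blast
    with real show False by blast
  qed
qed

theorem theorem3:
  fixes V :: "'a set" and E :: "'a set set" and k :: nat
  assumes "k \<ge> 3"
    and "hypertree k V E"
  shows "(\<forall>lam\<in>hg_spectrum k V E. lam ^ k \<in> \<real>) \<longleftrightarrow> power_tree k V E"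
proof
  assume "\<forall>lam\<in>hg_spectrum k V E. lam ^ k \<in> \<real>"
  then show "power_tree k V E"
    using power_tree_if_eigenvalue_powers_real[OF assms(2)] assms(1) by simp
next
  assume power: "power_tree k V E"
  have uniform: "uniform_hypergraph k V E" using assms(2) by (simp add: hypertree_def)
  show "\<forall>lam\<in>hg_spectrum k V E. lam ^ k \<in> \<real>"
  proof
    fix lam assume "lam \<in> hg_spectrum k V E"
    then show "lam ^ k \<in> \<real>"
      using eigenvalue_power_real_if_power_tree[OF uniform _ power] assms(1) by simp
  qed
qed

end
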